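(* Let $\Omega$, $d$ and the finite set $\mathbb{Y}\subset\Omega$ be as in the context. Given $x'_1,x'_2\in\Omega$, there exist points $y_1,\dots,y_{N}\in\mathbb{Y}$, $N=N(x'_1,x'_2)\ge1$, such that $\{x'_1,y_1,\dots,y_N,x'_2\}$ forms a zigzag in $\Omega$, i.e. $\overline{x'_1y_1}\subset\Omega$, $\overline{y_Nx'_2}\subset\Omega$, $\overline{y_iy_{i+1}}\subset\Omega$ for all $1\le i\le N-1$, and moreover $d(\overline{x'_1y_1},\partial\Omega)\ge\min\{d(x'_1,\partial\Omega),\frac d{10}\}$, $d(\overline{x'_2y_N},\partial\Omega)\ge\min\{d(x'_2,\partial\Omega),\frac d{10}\}$, and $d(\overline{y_iy_{i+1}},\partial\Omega)>\frac d{10}$ for $1\le i\le N-1$.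
   Context: $\Omega\subset\mathbb{R}^3$ is a connected bounded open set with $C^2$ boundary, $n$ the outward unit normal, $\Omega_\epsilon=\{x\in\Omega:d(x,\partial\Omega)<\epsilon\}$, $\overline{xy}=\{sx+(1-s)y:0\le s\le1\}$. There is $\delta(\Omega)>0$ such that for $0<d<\min\{1,\delta\}$ (fixed) there are $x_1^0,\dots,x_{m_1}^0\in\partial\Omega$ with $\partial\Omega\subset\bigcup_iB(x_i^0,d/8)$, and for each $i$ an orthonormal basis $\{e_i^1,e_i^2,-n(x_i^0)\}$ and a $C^2$ function $\phi_i:\mathbb{R}^2\to\mathbb{R}$ with $\phi_i(0)=0$, $\nabla\phi_i(0)=0$, $|\nabla\phi_i|<\frac1{100}$, such that in $B(x_i^0,3d)$ (open and closed) $\partial\Omega$ is the graph $\{x_i^0+u_1e_i^1+u_2e_i^2-\phi_i(u_1,u_2)n(x_i^0)\}$ and $\Omega$ is $\{u_3>\phi_i(u_1,u_2)\}$ in coordinates $x_i^0+u_1e_i^1+u_2e_i^2-u_3n(x_i^0)$, and $B(x_i^0-\frac d2n(x_i^0),\frac d2)\subset B(x_i^0,d)\cap\Omega$. Set $y_i^0:=x_i^0-\frac{3d}4n(x_i^0)$ for $1\le i\le m_1$, and let $y_{m_1+1}^0,\dots,y_{m_1+m_2}^0\in\Omega\setminus\Omega_{d/8}$ be the centers of a finite subcover, with minimal number of balls, of the cover $\{B(x,\frac d{16})\}_{x\in\Omega\setminus\Omega_{d/8}}$ of $\Omega\setminus\Omega_{d/8}$. Then $\mathbb{Y}:=\{y_i^0:1\le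 i\le m_1+m_2\}$. Such a zigzag is called a "good zigzag" from $x'_1$ to $x'_2$ with $N+1$ segments. *)

theory Defs
  imports "HOL-Analysis.Analysis"
begin

definition C2_with_grad :: "(real^2 \<Rightarrow> real) \<Rightarrow> (real^2 \<Rightarrow> real^2) \<Rightarrow> bool" where
  "C2_with_grad f g \<longleftrightarrow>
     (\<forall>x. (f has_derivative (\<lambda>h. g x \<bullet> h)) (at x)) \<and>
     (\<exists>H :: real^2 \<Rightarrow> ((real^2) \<Rightarrow>\<^sub>L (real^2)).
        (\<forall>x. (g has_derivative blinfun_apply (H x)) (at x)) \<and> continuous_on UNIV H)"

definition orthonormal3 :: "real^3 \<Rightarrow> real^3 \<Rightarrow> real^3 \<Rightarrow> bool" where
  "orthonormal3 a b c \<longleftrightarrow> a \<bullet> a = 1 \<and> b \<bullet> b = 1 \<and> c \<bullet> c = 1 \<and>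
     a \<bullet> b = 0 \<and> a \<bullet> c = 0 \<and> b \<bullet> c = 0"

definition C2_boundary :: "(real^3) set \<Rightarrow> bool" where
  "C2_boundary \<Omega> \<longleftrightarrow> (\<forall>p\<in>frontier \<Omega>. \<exists>r>0. \<exists>a b c f g.
      orthonormal3 a b c \<and> C2_with_grad f g \<and>
      \<Omega> \<inter> ball p r = {p + (u$1) *\<^sub>R a + (u$2) *\<^sub>R b + t *\<^sub>R c | u t. t > f u} \<inter> ball p r)"

definition bdry_layer :: "(real^3) set \<Rightarrow> real \<Rightarrow> (real^3) set" where
  "bdry_layer \<Omega> \<epsilon> = {x\<in>\<Omega>. infdist x (frontier \<Omega>) < \<epsilon>}"

text \<open>The graph of phi over the tangent plane at x0, with inward direction -nu (nu = n(x0)).\<close>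
definition chart_graph :: "real^3 \<Rightarrow> real^3 \<Rightarrow> real^3 \<Rightarrow> real^3 \<Rightarrow> (real^2 \<Rightarrow> real) \<Rightarrow> (real^3) set" where
  "chart_graph x0 a b \<nu> \<phi> = {x0 + (u$1) *\<^sub>R a + (u$2) *\<^sub>R b - (\<phi> u) *\<^sub>R \<nu> | u. True}"

definition chart_above :: "real^3 \<Rightarrow> real^3 \<Rightarrow> real^3 \<Rightarrow> real^3 \<Rightarrow> (real^2 \<Rightarrow> real) \<Rightarrow> (real^3) set" where
  "chart_above x0 a b \<nu> \<phi> = {x0 + (u$1) *\<^sub>R a + (u$2) *\<^sub>R b - t *\<^sub>R \<nu> | u t. t > \<phi> u}"

definition good_charts ::
  "(real^3) set \<Rightarrow> real \<Rightarrow> nat \<Rightarrow> (nat \<Rightarrow> real^3) \<Rightarrow> (nat \<Rightarrow> real^3) \<Rightarrow> (nat \<Rightarrow> real^3)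
     \<Rightarrow> (nat \<Rightarrow> real^3) \<Rightarrow> (nat \<Rightarrow> real^2 \<Rightarrow> real) \<Rightarrow> (nat \<Rightarrow> real^2 \<Rightarrow> real^2) \<Rightarrow> bool" where
  "good_charts \<Omega> d m1 x0 e1 e2 \<nu> \<phi> g \<longleftrightarrow>
     (\<forall>i\<in>{1..m1}. x0 i \<in> frontier \<Omega>) \<and>
     frontier \<Omega> \<subseteq> (\<Union>i\<in>{1..m1}. ball (x0 i) (d/8)) \<and>
     (\<forall>i\<in>{1..m1}.
        orthonormal3 (e1 i) (e2 i) (- \<nu> i) \<and>
        C2_with_grad (\<phi> i) (g i) \<and> \<phi> i 0 = 0 \<and> g i 0 = 0 \<and>
        (\<forall>u. norm (g i u) < 1/100) \<and>
        (\<forall>B\<in>{ball (x0 i) (3*d), cball (x0 i) (3*d)}.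
            frontier \<Omega> \<inter> B = chart_graph (x0 i) (e1 i) (e2 i) (\<nu> i) (\<phi> i) \<inter> B \<and>
            \<Omega> \<inter> B = chart_above (x0 i) (e1 i) (e2 i) (\<nu> i) (\<phi> i) \<inter> B) \<and>
        ball (x0 i - (d/2) *\<^sub>R \<nu> i) (d/2) \<subseteq> ball (x0 i) d \<inter> \<Omega>)"

definition min_subcover_centres :: "(real^3) set \<Rightarrow> real \<Rightarrow> (real^3) set \<Rightarrow> bool" where
  "min_subcover_centres \<Omega> d C \<longleftrightarrow>
     (let K = \<Omega> - bdry_layer \<Omega> (d/8) in
      finite C \<and> C \<subseteq> K \<and> K \<subseteq> (\<Union>y\<in>C. ball y (d/16)) \<and>
      (\<forall>C'. finite C' \<and> C' \<subseteq> K \<and> K \<subseteq> (\<Union>y\<in>C'. ball y (d/16)) \<longrightarrow> card C \<le> card C'))"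

definition Yset :: "real \<Rightarrow> nat \<Rightarrow> (nat \<Rightarrow> real^3) \<Rightarrow> (nat \<Rightarrow> real^3) \<Rightarrow> (real^3) set \<Rightarrow> (real^3) set" where
  "Yset d m1 x0 \<nu> C = (\<lambda>i. x0 i - (3*d/4) *\<^sub>R \<nu> i) ` {1..m1} \<union> C"

end

theory Submission
  imports Defs
begin

text \<open>A point of \<open>\<Omega>\<close> at distance at least \<open>d/8\<close> from the boundary lies within \<open>d/16\<close>
  of a centre in \<open>C\<close>; a point closer to the boundary lies within \<open>d/4\<close> of a chart centre
  \<open>x\<^sub>i\<^sup>0\<close>, and in that chart the segment to \<open>y\<^sub>i\<^sup>0\<close> points into the cone above the graph
  of the 1/100-Lipschitz function \<open>\<phi>\<^sub>i\<close>, so the ball of radius \<open>d(x, \<partial>\<Omega>)\<close> slides along it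
  inside \<open>\<Omega>\<close>. Two points of \<open>\<Y>\<close> closer than \<open>d/8\<close> carry balls of radius \<open>d/8\<close> inside
  \<open>\<Omega>\<close>, which keeps the segment between them \<open>sqrt 3 d/16 > d/10\<close> away from the boundary.
  Finally \<open>\<Omega>\<close> is covered by the \<open>d/16\<close>-balls around \<open>\<Y>\<close> together with the \<open>d/4\<close>-balls
  around the \<open>x\<^sub>i\<^sup>0\<close>; overlapping pieces are linked by such short steps, so connectedness of
  \<open>\<Omega>\<close> links any two points of \<open>\<Y>\<close>.\<close>

lemma orthonormal3_expansion:
  fixes a b c x :: "real^3"
  assumes "orthonormal3 a b c"
  shows "x = (x \<bullet> a) *\<^sub>R a + (x \<bullet> b) *\<^sub>R b + (x \<bullet> c) *\<^sub>R c"
proof (rule ccontr)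
  define w where "w = x - ((x \<bullet> a) *\<^sub>R a + (x \<bullet> b) *\<^sub>R b + (x \<bullet> c) *\<^sub>R c)"
  assume "x \<noteq> (x \<bullet> a) *\<^sub>R a + (x \<bullet> b) *\<^sub>R b + (x \<bullet> c) *\<^sub>R c"
  then have "w \<noteq> 0" by (simp add: w_def)
  have unit: "a \<bullet> a = 1" "b \<bullet> b = 1" "c \<bullet> c = 1"
    and orth: "a \<bullet> b = 0" "a \<bullet> c = 0" "b \<bullet> c = 0"
    using assms by (auto simp: orthonormal3_def)
  moreover have "b \<bullet> a = 0" "c \<bullet> a = 0" "c \<bullet> b = 0" using orth by (simp_all add: inner_commute)
  ultimately have w_orth: "w \<bullet> a = 0" "w \<bullet> b = 0" "w \<bullet> c = 0"
    by (simp_all add: w_def inner_diff_left inner_add_left)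
  have "pairwise orthogonal {a, b, c, w}"
    using orth w_orth by (auto simp: pairwise_def orthogonal_def inner_commute)
  moreover have "0 \<notin> {a, b, c, w}" using unit \<open>w \<noteq> 0\<close> by auto
  ultimately have "card {a, b, c, w} \<le> DIM(real^3)"
    using pairwise_orthogonal_independent independent_bound by blast
  moreover have "a \<noteq> b" "a \<noteq> c" "b \<noteq> c" "a \<noteq> w" "b \<noteq> w" "c \<noteq> w"
    using unit orth w_orth by (metis zero_neq_one)+
  then have "card {a, b, c, w} = 4" by simp
  ultimately show False by simp
qed

lemma orthonormal3_tangential_norm_le:
  fixes a b c x :: "real^3"
  assumes "orthonormal3 a b c"
  shows "norm (vector [x \<bullet> a, x \<bullet> b] :: real^2) \<le> norm x"
proof -
  have "x \<bullet> x = ((x \<bullet> a) *\<^sub>R a + (x \<bullet> b) *\<^sub>R b + (x \<bullet> c) *\<^sub>R c) \<bullet> x"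
    using orthonormal3_expansion[OF assms, of x] by (rule arg_cong)
  then have "(norm x)\<^sup>2 = (x \<bullet> a)\<^sup>2 + (x \<bullet> b)\<^sup>2 + (x \<bullet> c)\<^sup>2"
    unfolding power2_norm_eq_inner
    by (simp add: inner_add_left inner_add_right inner_commute power2_eq_square)
  then have "(norm (vector [x \<bullet> a, x \<bullet> b] :: real^2))\<^sup>2 \<le> (norm x)\<^sup>2"
    by (simp add: norm_vec_def L2_set_def sum_2)
  then show ?thesis by (simp add: power2_le_iff_abs_le)
qed

lemma C2_with_grad_lipschitz:
  assumes "C2_with_grad f g" and "\<And>u. norm (g u) \<le> L"
  shows "\<bar>f u - f w\<bar> \<le> L * dist u w"
proof -
  have "(f has_derivative (\<lambda>h. g x \<bullet> h)) (at x within UNIV)" for x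
    using assms(1) by (simp add: C2_with_grad_def)
  moreover have "onorm (\<lambda>h. g x \<bullet> h) \<le> L" for x
  proof (rule onorm_le)
    fix h
    have "norm (g x \<bullet> h) \<le> norm (g x) * norm h" by (simp add: Cauchy_Schwarz_ineq2)
    also have "\<dots> \<le> L * norm h" by (simp add: assms(2) mult_right_mono)
    finally show "norm (g x \<bullet> h) \<le> L * norm h" .
  qed
  ultimately have "norm (f u - f w) \<le> L * norm (u - w)"
    by (intro differentiable_bound[OF convex_UNIV]) auto
  then show ?thesis by (simp add: dist_norm)
qed

lemma sq_dist_closed_segment_ge:
  fixes q y y' p :: "'a::real_inner"
  assumes "h \<le> dist q y" and "h \<le> dist q y'" and "0 \<le> h" and "p \<in> closed_segment y y'"
  shows "h\<^sup>2 - (dist y y')\<^sup>2 / 4 \<le> (dist q p)\<^sup>2"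
proof -
  obtain s where s: "0 \<le> s" "s \<le> 1" "p = (1 - s) *\<^sub>R y + s *\<^sub>R y'"
    using assms(4) by (auto simp: closed_segment_def)
  define A B where "A = q - y" and "B = q - y'"
  have qp: "q - p = (1 - s) *\<^sub>R A + s *\<^sub>R B" and yy': "y - y' = B - A"
    by (simp_all add: A_def B_def s(3) algebra_simps)
  have parallelogram:
    "(dist q p)\<^sup>2 = (1 - s) * (norm A)\<^sup>2 + s * (norm B)\<^sup>2 - s * (1 - s) * (dist y y')\<^sup>2"
    unfolding dist_norm qp yy' power2_norm_eq_inner
    by (simp add: inner_commute algebra_simps power2_eq_square)
  have "h\<^sup>2 \<le> (norm A)\<^sup>2" "h\<^sup>2 \<le> (norm B)\<^sup>2"
    using assms(1-3) by (simp_all add: A_def B_def dist_norm power_mono)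
  then have "(1 - s) * h\<^sup>2 \<le> (1 - s) * (norm A)\<^sup>2" "s * h\<^sup>2 \<le> s * (norm B)\<^sup>2"
    using s(1,2) by (simp_all add: mult_left_mono)
  then have "h\<^sup>2 \<le> (1 - s) * (norm A)\<^sup>2 + s * (norm B)\<^sup>2" by (simp add: algebra_simps)
  moreover have "s * (1 - s) * (dist y y')\<^sup>2 \<le> (dist y y')\<^sup>2 / 4"
  proof -
    have "s * (1 - s) \<le> 1/4" using zero_le_power2[of "s - 1/2"] by (simp add: power2_eq_square algebra_simps)
    then show ?thesis using mult_right_mono[of "s * (1 - s)" "1/4" "(dist y y')\<^sup>2"] by simp
  qed
  ultimately show ?thesis unfolding parallelogram by simp
qed

lemma ball_subset_imp_le_dist_frontier:
  assumes "ball p r \<subseteq> S" and "q \<in> frontier S"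
  shows "r \<le> dist p q"
proof (rule ccontr)
  assume "\<not> r \<le> dist p q"
  then have "q \<in> interior S" using interior_maximal[OF assms(1) open_ball] by auto
  then show False using assms(2) by (simp add: frontier_def)
qed

lemma ball_subset_imp_le_setdist_frontier:
  assumes "T \<noteq> {}" and "frontier S \<noteq> {}" and "\<And>p. p \<in> T \<Longrightarrow> ball p r \<subseteq> S"
  shows "r \<le> setdist T (frontier S)"
proof (rule le_setdistI)
  fix p q assume "p \<in> T" "q \<in> frontier S"
  then show "r \<le> dist p q" using assms(3) ball_subset_imp_le_dist_frontier by blast
qed (use assms(1,2) in auto)

lemma ball_subset_imp_le_infdist_frontier:
  "frontier S \<noteq> {} \<Longrightarrow> ball p r \<subseteq> S \<Longrightarrow> r \<le> infdist p (frontier S)"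
  unfolding infdist_eq_setdist by (rule ball_subset_imp_le_setdist_frontier) auto

lemma ball_infdist_frontier_subset:
  fixes S :: "'a::real_normed_vector set"
  assumes "p \<in> S"
  shows "ball p (infdist p (frontier S)) \<subseteq> S"
proof
  fix x assume x: "x \<in> ball p (infdist p (frontier S))"
  show "x \<in> S"
  proof (rule ccontr)
    assume "x \<notin> S"
    have "0 < infdist p (frontier S)" using x by (auto intro: le_less_trans[OF zero_le_dist])
    then have "p \<in> ball p (infdist p (frontier S)) \<inter> S" using assms by simp
    then have "ball p (infdist p (frontier S)) \<inter> frontier S \<noteq> {}"
      using connected_Int_frontier[OF connected_ball] x \<open>x \<notin> S\<close> by blast
    then obtain q where "q \<in> frontier S" "dist p q < infdist p (frontier S)" by auto
    then show False using infdist_le[of q "frontier S" p] by simp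
  qed
qed

lemma connected_subset_if_setdist_frontier_pos:
  assumes "connected T" and "T \<inter> S \<noteq> {}" and "0 < setdist T (frontier S)"
  shows "T \<subseteq> S"
proof (rule ccontr)
  assume "\<not> T \<subseteq> S"
  then obtain q where "q \<in> T" "q \<in> frontier S"
    using connected_Int_frontier[OF assms(1,2)] by blast
  then show False using assms(3) setdist_eq_0I by fastforce
qed

lemma closed_segment_setdist_frontier_ge:
  fixes S :: "'a::real_inner set"
  assumes "ball a r \<subseteq> S" and "ball b r \<subseteq> S" and "frontier S \<noteq> {}" and "0 \<le> r"
  shows "sqrt (r\<^sup>2 - (dist a b)\<^sup>2 / 4) \<le> setdist (closed_segment a b) (frontier S)"
proof (rule le_setdistI)
  fix p q assume p: "p \<in> closed_segment a b" and q: "q \<in> frontier S"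
  have "r \<le> dist q a" "r \<le> dist q b"
    using ball_subset_imp_le_dist_frontier[OF _ q] assms(1,2) by (simp_all add: dist_commute)
  then have "r\<^sup>2 - (dist a b)\<^sup>2 / 4 \<le> (dist q p)\<^sup>2"
    by (rule sq_dist_closed_segment_ge[OF _ _ assms(4) p])
  then show "sqrt (r\<^sup>2 - (dist a b)\<^sup>2 / 4) \<le> dist p q"
    by (simp add: dist_commute real_le_lsqrt)
qed (use assms(3) in auto)

lemma connected_cover_chain:
  fixes U :: "'i \<Rightarrow> 'a::topological_space set"
  assumes "connected S" and cover: "S \<subseteq> (\<Union>i\<in>I. U i)" and "\<And>i. i \<in> I \<Longrightarrow> open (U i)"
    and overlap: "\<And>i j. i \<in> I \<Longrightarrow> j \<in> I \<Longrightarrow> U i \<inter> U j \<inter> S \<noteq> {} \<Longrightarrow> P i j"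
    and "i \<in> I" "j \<in> I" "U i \<inter> S \<noteq> {}" "U j \<inter> S \<noteq> {}"
  shows "P\<^sup>*\<^sup>* i j"
proof (rule ccontr)
  define J where "J = {k \<in> I. P\<^sup>*\<^sup>* i k}"
  assume "\<not> P\<^sup>*\<^sup>* i j"
  have "open (\<Union>k\<in>J. U k)" "open (\<Union>k\<in>I - J. U k)"
    using assms(3) by (auto simp: J_def)
  moreover have "(\<Union>k\<in>J. U k) \<inter> (\<Union>k\<in>I - J. U k) \<inter> S = {}"
  proof (rule ccontr)
    assume "\<not> ?thesis"
    then obtain k l where "k \<in> J" "l \<in> I - J" "U k \<inter> U l \<inter> S \<noteq> {}" by blast
    then have "P k l" using overlap by (auto simp: J_def)
    then have "P\<^sup>*\<^sup>* i l"
      using \<open>k \<in> J\<close> by (auto simp: J_def intro: rtranclp.rtrancl_into_rtrancl)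
    then show False using \<open>l \<in> I - J\<close> by (simp add: J_def)
  qed
  moreover have "S \<subseteq> (\<Union>k\<in>J. U k) \<union> (\<Union>k\<in>I - J. U k)" using cover by blast
  ultimately have "(\<Union>k\<in>J. U k) \<inter> S = {} \<or> (\<Union>k\<in>I - J. U k) \<inter> S = {}"
    by (rule connectedD[OF assms(1)])
  moreover have "i \<in> J" "j \<in> I - J" using assms(5,6) \<open>\<not> P\<^sup>*\<^sup>* i j\<close> by (simp_all add: J_def)
  ultimately show False using assms(7,8) by blast
qed

lemma rtranclp_imp_successively:
  assumes "R\<^sup>*\<^sup>* a b"
  obtains xs where "xs \<noteq> []" "hd xs = a" "last xs = b" "successively R xs"
proof -
  from assms have "\<exists>xs. xs \<noteq> [] \<and> hd xs = a \<and> last xs = b \<and> successively R xs"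
  proof (induction rule: converse_rtranclp_induct)
    case base
    show ?case by (intro exI[of _ "[b]"]) simp
  next
    case (step a c)
    then obtain xs where "xs \<noteq> []" "hd xs = c" "last xs = b" "successively R xs" by blast
    with step.hyps(1) show ?case by (intro exI[of _ "a # xs"]) (simp add: successively_Cons)
  qed
  then show ?thesis using that by blast
qed

locale zigzag_setting =
  fixes \<Omega> :: "(real^3) set" and d :: real and m1 :: nat
    and x0 e1 e2 \<nu> :: "nat \<Rightarrow> real^3" and \<phi> :: "nat \<Rightarrow> real^2 \<Rightarrow> real"
    and g :: "nat \<Rightarrow> real^2 \<Rightarrow> real^2" and C :: "(real^3) set"
  assumes open_domain: "open \<Omega>" and bounded_domain: "bounded \<Omega>"
    and connected_domain: "connected \<Omega>" and nonempty_domain: "\<Omega> \<noteq> {}"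
    and d_pos: "0 < d" and charts: "good_charts \<Omega> d m1 x0 e1 e2 \<nu> \<phi> g"
    and subcover: "min_subcover_centres \<Omega> d C"
begin

abbreviation "Y \<equiv> Yset d m1 x0 \<nu> C"

lemma frontier_nonempty: "frontier \<Omega> \<noteq> {}"
  using nonempty_domain bounded_domain by (metis frontier_eq_empty not_bounded_UNIV)

definition core :: "(real^3) set" where
  "core = {p. ball p (d/8) \<subseteq> \<Omega>}"

lemma core_subset_domain: "core \<subseteq> \<Omega>"
  using d_pos by (auto simp: core_def)

lemma core_eq: "core = \<Omega> - bdry_layer \<Omega> (d/8)"
proof (intro equalityI subsetI)
  fix p assume p: "p \<in> core"
  then have "d/8 \<le> infdist p (frontier \<Omega>)"
    by (intro ball_subset_imp_le_infdist_frontier[OF frontier_nonempty]) (simp add: core_def)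
  with p core_subset_domain show "p \<in> \<Omega> - bdry_layer \<Omega> (d/8)" by (auto simp: bdry_layer_def)
next
  fix p assume "p \<in> \<Omega> - bdry_layer \<Omega> (d/8)"
  then have "p \<in> \<Omega>" and "ball p (d/8) \<subseteq> ball p (infdist p (frontier \<Omega>))"
    by (auto simp: bdry_layer_def intro: subset_ball)
  then show "p \<in> core" using ball_infdist_frontier_subset by (auto simp: core_def)
qed

lemma C_subset_core: "C \<subseteq> core" and core_subset_balls_C: "core \<subseteq> (\<Union>c\<in>C. ball c (d/16))"
  using subcover unfolding min_subcover_centres_def Let_def core_eq by auto

lemma
  assumes "i \<in> {1..m1}"
  shows chart_orthonormal: "orthonormal3 (e1 i) (e2 i) (- \<nu> i)"
    and chart_C2: "C2_with_grad (\<phi> i) (g i)"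
    and chart_origin: "\<phi> i 0 = 0"
    and chart_grad_small: "norm (g i u) \<le> 1/100"
    and chart_domain: "\<Omega> \<inter> ball (x0 i) (3*d) =
      chart_above (x0 i) (e1 i) (e2 i) (\<nu> i) (\<phi> i) \<inter> ball (x0 i) (3*d)"
    and chart_inner_ball: "ball (x0 i - (d/2) *\<^sub>R \<nu> i) (d/2) \<subseteq> \<Omega>"
proof -
  have H: "orthonormal3 (e1 i) (e2 i) (- \<nu> i) \<and>
        C2_with_grad (\<phi> i) (g i) \<and> \<phi> i 0 = 0 \<and> g i 0 = 0 \<and>
        (\<forall>u. norm (g i u) < 1/100) \<and>
        (\<forall>B\<in>{ball (x0 i) (3*d), cball (x0 i) (3*d)}.
            frontier \<Omega> \<inter> B = chart_graph (x0 i) (e1 i) (e2 i) (\<nu> i) (\<phi> i) \<inter> B \<and>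
            \<Omega> \<inter> B = chart_above (x0 i) (e1 i) (e2 i) (\<nu> i) (\<phi> i) \<inter> B) \<and>
        ball (x0 i - (d/2) *\<^sub>R \<nu> i) (d/2) \<subseteq> ball (x0 i) d \<inter> \<Omega>"
    using charts assms unfolding good_charts_def by blast
  show "orthonormal3 (e1 i) (e2 i) (- \<nu> i)" "C2_with_grad (\<phi> i) (g i)" "\<phi> i 0 = 0"
    using H by blast+
  have "norm (g i u) < 1/100" using H by blast
  then show "norm (g i u) \<le> 1/100" by simp
  show "\<Omega> \<inter> ball (x0 i) (3*d) = chart_above (x0 i) (e1 i) (e2 i) (\<nu> i) (\<phi> i) \<inter> ball (x0 i) (3*d)"
    using H by blast
  show "ball (x0 i - (d/2) *\<^sub>R \<nu> i) (d/2) \<subseteq> \<Omega>" using H by blast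
qed

lemma frontier_subset_chart_balls: "frontier \<Omega> \<subseteq> (\<Union>i\<in>{1..m1}. ball (x0 i) (d/8))"
  using charts unfolding good_charts_def by blast

lemma chart_inner:
  assumes "i \<in> {1..m1}"
  shows "e1 i \<bullet> e1 i = 1" "e2 i \<bullet> e2 i = 1" "\<nu> i \<bullet> \<nu> i = 1"
    "e1 i \<bullet> e2 i = 0" "e2 i \<bullet> e1 i = 0" "e1 i \<bullet> \<nu> i = 0" "\<nu> i \<bullet> e1 i = 0"
    "e2 i \<bullet> \<nu> i = 0" "\<nu> i \<bullet> e2 i = 0" "norm (\<nu> i) = 1"
  using chart_orthonormal[OF assms] by (auto simp: orthonormal3_def inner_commute norm_eq_1)

text \<open>For \<open>v = z - x\<^sub>i\<^sup>0\<close> these are the chart coordinates \<open>(u\<^sub>1, u\<^sub>2)\<close> and \<open>u\<^sub>3\<close> of \<open>z\<close>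
  in the frame \<open>e\<^sub>i\<^sup>1, e\<^sub>i\<^sup>2, -n(x\<^sub>i\<^sup>0)\<close>.\<close>
definition tangential :: "nat \<Rightarrow> real^3 \<Rightarrow> real^2" where
  "tangential i v = vector [v \<bullet> e1 i, v \<bullet> e2 i]"

definition height :: "nat \<Rightarrow> real^3 \<Rightarrow> real" where
  "height i v = v \<bullet> (- \<nu> i)"

lemma tangential_add: "tangential i (v + w) = tangential i v + tangential i w"
  and tangential_diff: "tangential i (v - w) = tangential i v - tangential i w"
  and tangential_scaleR: "tangential i (c *\<^sub>R v) = c *\<^sub>R tangential i v"
  and height_add: "height i (v + w) = height i v + height i w"
  and height_diff: "height i (v - w) = height i v - height i w"
  and height_scaleR: "height i (c *\<^sub>R v) = c * height i v"
  by (simp_all add: tangential_def height_def vec_eq_iff forall_2 inner_add_left inner_diff_left)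

lemma norm_tangential_le: "i \<in> {1..m1} \<Longrightarrow> norm (tangential i v) \<le> norm v"
  unfolding tangential_def by (rule orthonormal3_tangential_norm_le[OF chart_orthonormal])

lemma abs_height_le: "i \<in> {1..m1} \<Longrightarrow> \<bar>height i v\<bar> \<le> norm v"
  using Cauchy_Schwarz_ineq2[of v "- \<nu> i"] chart_inner(10) by (simp add: height_def)

lemma chart_expansion:
  assumes "i \<in> {1..m1}"
  shows "z = x0 i + (tangential i (z - x0 i) $ 1) *\<^sub>R e1 i + (tangential i (z - x0 i) $ 2) *\<^sub>R e2 i
    - height i (z - x0 i) *\<^sub>R \<nu> i"
proof -
  define v where "v = z - x0 i"
  have "z = x0 i + v" by (simp add: v_def)
  also have "v = (v \<bullet> e1 i) *\<^sub>R e1 i + (v \<bullet> e2 i) *\<^sub>R e2 i + (v \<bullet> - \<nu> i) *\<^sub>R - \<nu> i"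
    by (rule orthonormal3_expansion[OF chart_orthonormal[OF assms]])
  finally show ?thesis unfolding v_def[symmetric] by (simp add: tangential_def height_def algebra_simps)
qed

lemma chart_mem_iff:
  assumes i: "i \<in> {1..m1}" and z: "z \<in> ball (x0 i) (3*d)"
  shows "z \<in> \<Omega> \<longleftrightarrow> \<phi> i (tangential i (z - x0 i)) < height i (z - x0 i)"
proof -
  have "z \<in> \<Omega> \<longleftrightarrow> z \<in> chart_above (x0 i) (e1 i) (e2 i) (\<nu> i) (\<phi> i)"
    using chart_domain[OF i] z by blast
  also have "\<dots> \<longleftrightarrow> \<phi> i (tangential i (z - x0 i)) < height i (z - x0 i)"
  proof
    assume "z \<in> chart_above (x0 i) (e1 i) (e2 i) (\<nu> i) (\<phi> i)"
    then obtain u t where z_eq: "z = x0 i + (u$1) *\<^sub>R e1 i + (u$2) *\<^sub>R e2 i - t *\<^sub>R \<nu> i"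
      and "\<phi> i u < t"
      unfolding chart_above_def by blast
    moreover have "tangential i (z - x0 i) = u" "height i (z - x0 i) = t"
      using chart_inner[OF i] unfolding z_eq
      by (simp_all add: tangential_def height_def vec_eq_iff forall_2 inner_add_left inner_diff_left)
    ultimately show "\<phi> i (tangential i (z - x0 i)) < height i (z - x0 i)" by simp
  next
    assume "\<phi> i (tangential i (z - x0 i)) < height i (z - x0 i)"
    then show "z \<in> chart_above (x0 i) (e1 i) (e2 i) (\<nu> i) (\<phi> i)"
      unfolding chart_above_def using chart_expansion[OF i, of z] by blast
  qed
  finally show ?thesis .
qed

lemma chart_height_lower_bound:
  assumes i: "i \<in> {1..m1}" and "z \<in> \<Omega>" and "z \<in> ball (x0 i) (3*d)"
  shows "- norm (tangential i (z - x0 i)) / 100 < height i (z - x0 i)"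
proof -
  have "\<bar>\<phi> i (tangential i (z - x0 i)) - \<phi> i 0\<bar> \<le> 1/100 * dist (tangential i (z - x0 i)) 0"
    by (rule C2_with_grad_lipschitz[OF chart_C2[OF i] chart_grad_small[OF i]])
  then show ?thesis using chart_mem_iff[OF i assms(3)] assms(2) chart_origin[OF i] by simp
qed

text \<open>Moving upwards, inside the cone above the graph of the 1/100-Lipschitz function \<open>\<phi> i\<close>,
  keeps points above the graph; the distance hypotheses keep the moving ball inside the chart.\<close>
lemma ball_slides_upward:
  assumes i: "i \<in> {1..m1}" and ball: "ball z r \<subseteq> \<Omega>"
    and cone: "norm (tangential i (w - z)) / 100 \<le> height i (w - z)"
    and z: "dist (x0 i) z + r \<le> 3*d" and w: "dist (x0 i) w + r \<le> 3*d"
    and p: "p \<in> closed_segment z w"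
  shows "ball p r \<subseteq> \<Omega>"
proof
  fix q assume q: "q \<in> ball p r"
  obtain \<tau> where \<tau>: "0 \<le> \<tau>" "\<tau> \<le> 1" "p = z + \<tau> *\<^sub>R (w - z)"
    using p by (auto simp: in_segment algebra_simps)
  define q' where "q' = q - \<tau> *\<^sub>R (w - z)"
  have "dist z q' < r" using q by (simp add: q'_def \<tau>(3) dist_norm algebra_simps)
  then have "q' \<in> \<Omega>" and "q' \<in> ball (x0 i) (3*d)"
    using ball z dist_triangle[of "x0 i" q' z] by auto
  then have below: "\<phi> i (tangential i (q' - x0 i)) < height i (q' - x0 i)"
    using chart_mem_iff[OF i] by blast
  have "p \<in> cball (x0 i) (3*d - r)"
    using closed_segment_subset[of z "cball (x0 i) (3*d - r)" w] z w p by auto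
  then have q_chart: "q \<in> ball (x0 i) (3*d)" using q dist_triangle[of "x0 i" q p] by simp
  have shift: "q - x0 i = (q' - x0 i) + \<tau> *\<^sub>R (w - z)" by (simp add: q'_def)
  have "dist (tangential i (q - x0 i)) (tangential i (q' - x0 i)) = \<tau> * norm (tangential i (w - z))"
    using \<tau>(1) by (simp add: shift tangential_add tangential_scaleR dist_norm)
  then have "\<bar>\<phi> i (tangential i (q - x0 i)) - \<phi> i (tangential i (q' - x0 i))\<bar>
      \<le> \<tau> * (norm (tangential i (w - z)) / 100)"
    using C2_with_grad_lipschitz[OF chart_C2[OF i] chart_grad_small[OF i],
        of "tangential i (q - x0 i)" "tangential i (q' - x0 i)"] by simp
  then have "\<phi> i (tangential i (q - x0 i))
      \<le> \<phi> i (tangential i (q' - x0 i)) + \<tau> * (norm (tangential i (w - z)) / 100)"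
    by linarith
  also have "\<dots> < height i (q' - x0 i) + \<tau> * height i (w - z)"
    using below mult_left_mono[OF cone \<tau>(1)] by linarith
  also have "\<dots> = height i (q - x0 i)" by (simp add: shift height_add height_scaleR)
  finally show "q \<in> \<Omega>" using chart_mem_iff[OF i q_chart] by simp
qed

definition y0 :: "nat \<Rightarrow> real^3" where
  "y0 i = x0 i - (3*d/4) *\<^sub>R \<nu> i"

lemma Y_eq: "Y = y0 ` {1..m1} \<union> C"
  unfolding Yset_def y0_def by simp

lemma y0_coords:
  assumes "i \<in> {1..m1}"
  shows "tangential i (y0 i - x0 i) = 0" "height i (y0 i - x0 i) = 3*d/4"
    "dist (x0 i) (y0 i) = 3*d/4"
  using chart_inner[OF assms] d_pos
  by (simp_all add: y0_def tangential_def height_def dist_norm vec_eq_iff forall_2)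

lemma ball_y0_subset:
  assumes i: "i \<in> {1..m1}"
  shows "ball (y0 i) (d/4) \<subseteq> \<Omega>"
proof -
  define c where "c = x0 i - (d/2) *\<^sub>R \<nu> i"
  have "dist c (y0 i) = d/4"
    using chart_inner(10)[OF i] d_pos by (simp add: c_def y0_def dist_norm algebra_simps flip: scaleR_diff_left)
  have "ball (y0 i) (d/4) \<subseteq> ball c (d/2)"
  proof
    fix t assume "t \<in> ball (y0 i) (d/4)"
    then show "t \<in> ball c (d/2)" using dist_triangle[of c t "y0 i"] \<open>dist c (y0 i) = d/4\<close> by simp
  qed
  then show ?thesis using chart_inner_ball[OF i] by (simp add: c_def)
qed

lemma Y_subset_core: "Y \<subseteq> core"
proof -
  have "y0 i \<in> core" if "i \<in> {1..m1}" for i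
    using ball_y0_subset[OF that] subset_ball[of "d/8" "d/4"] d_pos by (auto simp: core_def)
  then have "y0 ` {1..m1} \<subseteq> core" by blast
  then show ?thesis unfolding Y_eq using C_subset_core by blast
qed

lemma y0_in_Y: "i \<in> {1..m1} \<Longrightarrow> y0 i \<in> Y"
  by (simp add: Y_eq)

lemma ball_Y_subset: "y \<in> Y \<Longrightarrow> ball y (d/8) \<subseteq> \<Omega>"
  using Y_subset_core by (auto simp: core_def)

lemma ball_slides_to_y0:
  assumes i: "i \<in> {1..m1}" and "ball a r \<subseteq> \<Omega>" and "r \<le> d/8" and "dist (x0 i) a \<le> 5*d/16"
    and "p \<in> closed_segment a (y0 i)"
  shows "ball p r \<subseteq> \<Omega>"
proof (rule ball_slides_upward[OF i assms(2) _ _ _ assms(5)])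
  have "norm (tangential i (a - x0 i)) \<le> 5*d/16" "\<bar>height i (a - x0 i)\<bar> \<le> 5*d/16"
    using norm_tangential_le[OF i] abs_height_le[OF i] assms(4)
    by (metis dist_norm norm_minus_commute order_trans)+
  then show "norm (tangential i (y0 i - a)) / 100 \<le> height i (y0 i - a)"
    using tangential_diff[of i "y0 i - x0 i" "a - x0 i"] height_diff[of i "y0 i - x0 i" "a - x0 i"]
      y0_coords[OF i] d_pos by simp
  show "dist (x0 i) a + r \<le> 3*d" "dist (x0 i) (y0 i) + r \<le> 3*d"
    using assms(3,4) y0_coords(3)[OF i] d_pos by simp_all
qed

definition adj :: "real^3 \<Rightarrow> real^3 \<Rightarrow> bool" where
  "adj a b \<longleftrightarrow> a \<in> Y \<and> b \<in> Y \<and> dist a b < d/8"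

lemma symp_adj: "symp adj"
  by (auto simp: symp_def adj_def dist_commute)

lemma adj_segment:
  assumes "a \<in> core" and "b \<in> core" and "dist a b < d/8"
  shows "closed_segment a b \<subseteq> \<Omega>" and "d/10 < setdist (closed_segment a b) (frontier \<Omega>)"
proof -
  have "(dist a b)\<^sup>2 < (d/8)\<^sup>2" using assms(3) by (simp add: power_strict_mono)
  moreover have "0 < d\<^sup>2" "(d/8)\<^sup>2 = d\<^sup>2/64" "(d/10)\<^sup>2 = d\<^sup>2/100"
    using d_pos by (simp_all add: power_divide)
  ultimately have "(d/10)\<^sup>2 < (d/8)\<^sup>2 - (dist a b)\<^sup>2 / 4" by linarith
  then have "d/10 < sqrt ((d/8)\<^sup>2 - (dist a b)\<^sup>2 / 4)" by (rule real_less_rsqrt)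
  also have "\<dots> \<le> setdist (closed_segment a b) (frontier \<Omega>)"
    using assms(1,2) frontier_nonempty d_pos
    by (intro closed_segment_setdist_frontier_ge) (simp_all add: core_def)
  finally show far: "d/10 < setdist (closed_segment a b) (frontier \<Omega>)" .
  show "closed_segment a b \<subseteq> \<Omega>"
    using far d_pos assms(1) core_subset_domain
    by (intro connected_subset_if_setdist_frontier_pos) auto
qed

lemma adj_chain_in_core:
  assumes "S \<subseteq> core" and "connected S" and "a \<in> Y" and "b \<in> Y"
    and "s \<in> S" and "s' \<in> S" and "dist a s < d/16" and "dist b s' < d/16"
  shows "adj\<^sup>*\<^sup>* a b"
proof (rule connected_cover_chain[where U = "\<lambda>a. ball a (d/16)"])
  show "S \<subseteq> (\<Union>a\<in>Y. ball a (d/16))" using assms(1) core_subset_balls_C Y_eq by blast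
  fix a b assume "a \<in> Y" "b \<in> Y" "ball a (d/16) \<inter> ball b (d/16) \<inter> S \<noteq> {}"
  then show "adj a b"
    using dist_triangle_less_add[of a _ "d/16" b "d/16"] by (auto simp: adj_def dist_commute)
qed (use assms in auto)

lemma adj_chain_to_y0:
  assumes a: "a \<in> Y" and i: "i \<in> {1..m1}" and "dist a z < d/16" and "dist (x0 i) z < d/4"
  shows "adj\<^sup>*\<^sup>* a (y0 i)"
proof (rule adj_chain_in_core[where S = "closed_segment a (y0 i)" and s = a and s' = "y0 i"])
  have "dist (x0 i) a \<le> 5*d/16"
    using assms(3,4) dist_triangle[of "x0 i" a z] by (simp add: dist_commute)
  then show "closed_segment a (y0 i) \<subseteq> core"
    using ball_slides_to_y0[OF i ball_Y_subset[OF a]] by (auto simp: core_def)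
  show "y0 i \<in> Y" by (rule y0_in_Y[OF i])
qed (use a d_pos in auto)

lemma adj_chain_y0_y0:
  assumes i: "i \<in> {1..m1}" and j: "j \<in> {1..m1}"
    and "dist (x0 i) z < d/4" and "dist (x0 j) z < d/4"
  shows "adj\<^sup>*\<^sup>* (y0 i) (y0 j)"
proof -
  txt \<open>The segment from \<open>y0 i\<close> to \<open>y0 j\<close> need not point upwards in chart \<open>i\<close>;
    the detour through \<open>p\<close>, at height \<open>d\<close> above \<open>y0 j\<close>, consists of two segments that do.\<close>
  define p where "p = y0 j - d *\<^sub>R \<nu> i"
  have dist_j: "dist (x0 i) (y0 j) < 5*d/4"
    using assms(3,4) y0_coords(3)[OF j] dist_triangle[of "x0 i" "y0 j" "x0 j"]
      dist_triangle[of "x0 i" "x0 j" z] by (simp add: dist_commute)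
  have dist_p: "dist (x0 i) p \<le> dist (x0 i) (y0 j) + d"
    using dist_triangle[of "x0 i" p "y0 j"] chart_inner(10)[OF i] d_pos by (simp add: p_def dist_norm)
  have p_coords: "tangential i (p - x0 i) = tangential i (y0 j - x0 i)"
    "height i (p - x0 i) = height i (y0 j - x0 i) + d"
    using chart_inner[OF i] unfolding p_def
    by (simp_all add: tangential_def height_def vec_eq_iff forall_2 inner_diff_left)
  have "closed_segment (y0 j) p \<subseteq> core"
  proof
    fix q assume "q \<in> closed_segment (y0 j) p"
    then have "ball q (d/8) \<subseteq> \<Omega>"
    proof (rule ball_slides_upward[OF i ball_Y_subset[OF y0_in_Y[OF j]], rotated 3])
      show "norm (tangential i (p - y0 j)) / 100 \<le> height i (p - y0 j)"
        using tangential_diff[of i "p - x0 i" "y0 j - x0 i"] height_diff[of i "p - x0 i" "y0 j - x0 i"]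
          p_coords d_pos by simp
    qed (use dist_j dist_p d_pos in auto)
    then show "q \<in> core" by (simp add: core_def)
  qed
  moreover have "closed_segment (y0 i) p \<subseteq> core"
  proof
    have "y0 j \<in> ball (x0 i) (3*d)" using dist_j d_pos by simp
    then have "- norm (tangential i (y0 j - x0 i)) / 100 < height i (y0 j - x0 i)"
      using chart_height_lower_bound[OF i] y0_in_Y[OF j] Y_subset_core core_subset_domain by blast
    moreover have "norm (tangential i (y0 j - x0 i)) \<le> 5*d/4"
      using norm_tangential_le[OF i, of "y0 j - x0 i"] dist_j by (simp add: dist_norm norm_minus_commute)
    ultimately have cone: "norm (tangential i (p - y0 i)) / 100 \<le> height i (p - y0 i)"
      using tangential_diff[of i "p - x0 i" "y0 i - x0 i"] height_diff[of i "p - x0 i" "y0 i - x0 i"]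
        p_coords y0_coords[OF i] d_pos by simp
    fix q assume "q \<in> closed_segment (y0 i) p"
    then have "ball q (d/8) \<subseteq> \<Omega>"
      by (rule ball_slides_upward[OF i ball_Y_subset[OF y0_in_Y[OF i]] cone, rotated 2])
        (use dist_j dist_p y0_coords(3)[OF i] d_pos in auto)
    then show "q \<in> core" by (simp add: core_def)
  qed
  moreover have "connected (closed_segment (y0 i) p \<union> closed_segment (y0 j) p)"
    by (rule connected_Un) auto
  ultimately show ?thesis
    using y0_in_Y[OF i] y0_in_Y[OF j] d_pos
    by (intro adj_chain_in_core[where S = "closed_segment (y0 i) p \<union> closed_segment (y0 j) p"
          and s = "y0 i" and s' = "y0 j"]) auto
qed

lemma near_chart_centre:
  assumes "z \<in> \<Omega>" and "z \<notin> core"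
  obtains i where "i \<in> {1..m1}" and "dist (x0 i) z < d/4"
proof -
  have "ball z (d/8) \<inter> \<Omega> \<noteq> {}" using assms(1) d_pos by (metis IntI centre_in_ball empty_iff
      zero_less_divide_iff zero_less_numeral)
  moreover have "ball z (d/8) - \<Omega> \<noteq> {}" using assms(2) by (simp add: core_def)
  ultimately obtain q where q: "q \<in> ball z (d/8)" "q \<in> frontier \<Omega>"
    using connected_Int_frontier[OF connected_ball, of z "d/8" \<Omega>] by blast
  then obtain i where "i \<in> {1..m1}" "q \<in> ball (x0 i) (d/8)"
    using frontier_subset_chart_balls by blast
  then show ?thesis
    using q(1) dist_triangle[of "x0 i" z q] by (intro that[of i]) (auto simp: dist_commute)
qed

text \<open>The \<open>d/16\<close>-balls around \<open>C\<close> only cover \<open>\<Omega> - \<Omega>\<^sub>d\<^sub>/\<^sub>8\<close>; the layer near the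
  boundary is covered by the \<open>d/4\<close>-balls around the chart centres, attached to \<open>y0 i\<close>.\<close>
definition nbhd :: "real^3 \<Rightarrow> (real^3) set" where
  "nbhd a = ball a (d/16) \<union> (\<Union>i\<in>{i \<in> {1..m1}. y0 i = a}. ball (x0 i) (d/4))"

lemma domain_subset_nbhds: "\<Omega> \<subseteq> (\<Union>a\<in>Y. nbhd a)"
proof
  fix z assume z: "z \<in> \<Omega>"
  show "z \<in> (\<Union>a\<in>Y. nbhd a)"
  proof (cases "z \<in> core")
    case True
    then obtain c where "c \<in> C" "z \<in> ball c (d/16)" using core_subset_balls_C by blast
    then show ?thesis using Y_eq by (auto simp: nbhd_def)
  next
    case False
    then obtain i where "i \<in> {1..m1}" "dist (x0 i) z < d/4" using near_chart_centre z by blast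
    then show ?thesis using Y_eq by (auto simp: nbhd_def)
  qed
qed

lemma nbhd_overlap_chain:
  assumes a: "a \<in> Y" and b: "b \<in> Y" and "nbhd a \<inter> nbhd b \<noteq> {}"
  shows "adj\<^sup>*\<^sup>* a b"
proof -
  obtain z where "z \<in> nbhd a" "z \<in> nbhd b" using assms(3) by blast
  then have "dist a z < d/16 \<or> (\<exists>i\<in>{1..m1}. y0 i = a \<and> dist (x0 i) z < d/4)"
    "dist b z < d/16 \<or> (\<exists>j\<in>{1..m1}. y0 j = b \<and> dist (x0 j) z < d/4)"
    by (auto simp: nbhd_def)
  then consider (balls) "dist a z < d/16" "dist b z < d/16"
    | (ball_chart) j where "j \<in> {1..m1}" "y0 j = b" "dist a z < d/16" "dist (x0 j) z < d/4"
    | (chart_ball) i where "i \<in> {1..m1}" "y0 i = a" "dist (x0 i) z < d/4" "dist b z < d/16"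
    | (charts) i j where "i \<in> {1..m1}" "y0 i = a" "dist (x0 i) z < d/4"
        "j \<in> {1..m1}" "y0 j = b" "dist (x0 j) z < d/4"
    by blast
  then show ?thesis
  proof cases
    case balls
    then have "adj a b"
      using a b dist_triangle_less_add[of a z "d/16" b "d/16"] by (simp add: adj_def dist_commute)
    then show ?thesis by blast
  next
    case ball_chart
    then show ?thesis using adj_chain_to_y0[OF a] by blast
  next
    case chart_ball
    then show ?thesis
      using adj_chain_to_y0[OF b] sympD[OF symp_rtranclp[OF symp_adj]] by blast
  next
    case charts
    then show ?thesis using adj_chain_y0_y0 by blast
  qed
qed

lemma Y_chain:
  assumes "a \<in> Y" and "b \<in> Y"
  shows "adj\<^sup>*\<^sup>* a b"
proof -
  have centre: "y \<in> nbhd y \<inter> \<Omega>" if "y \<in> Y" for y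
  proof -
    have "y \<in> ball y (d/16)" "y \<in> ball y (d/8)" using d_pos by simp_all
    then show ?thesis using ball_Y_subset[OF that] by (auto simp: nbhd_def)
  qed
  have "(adj\<^sup>*\<^sup>*)\<^sup>*\<^sup>* a b"
  proof (rule connected_cover_chain[OF connected_domain domain_subset_nbhds])
    show "open (nbhd y)" for y by (simp add: nbhd_def open_Un open_UN)
    show "adj\<^sup>*\<^sup>* y y'" if "y \<in> Y" "y' \<in> Y" "nbhd y \<inter> nbhd y' \<inter> \<Omega> \<noteq> {}" for y y'
      using nbhd_overlap_chain that by blast
    show "nbhd a \<inter> \<Omega> \<noteq> {}" "nbhd b \<inter> \<Omega> \<noteq> {}" using centre assms by blast+
  qed (use assms in simp_all)
  then show ?thesis by simp
qed

lemma segment_to_Y: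
  assumes x: "x \<in> \<Omega>"
  obtains y where "y \<in> Y" and "closed_segment x y \<subseteq> \<Omega>"
    and "min (infdist x (frontier \<Omega>)) (d/10) \<le> setdist (closed_segment x y) (frontier \<Omega>)"
proof (cases "x \<in> core")
  case True
  then obtain c where c: "c \<in> C" "dist x c < d/16" using core_subset_balls_C by (auto simp: dist_commute)
  have "c \<in> core" using c(1) C_subset_core by blast
  moreover have "dist x c < d/8" using c(2) d_pos by simp
  ultimately have "closed_segment x c \<subseteq> \<Omega>" "d/10 < setdist (closed_segment x c) (frontier \<Omega>)"
    using adj_segment[OF True] by blast+
  then show ?thesis using that[of c] c(1) Y_eq by fastforce
next
  case False
  define r where "r = infdist x (frontier \<Omega>)"
  obtain i where i: "i \<in> {1..m1}" "dist (x0 i) x < d/4" using near_chart_centre x False by blast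
  have "r \<le> d/8" using x False by (simp add: r_def core_eq bdry_layer_def)
  moreover have "dist (x0 i) x \<le> 5*d/16" using i(2) d_pos by simp
  moreover have "ball x r \<subseteq> \<Omega>" unfolding r_def by (rule ball_infdist_frontier_subset[OF x])
  ultimately have balls: "ball p r \<subseteq> \<Omega>" if "p \<in> closed_segment x (y0 i)" for p
    using ball_slides_to_y0[OF i(1) _ _ _ that] by blast
  have "0 < r" unfolding r_def
    using open_domain x frontier_nonempty by (intro infdist_pos_not_in_closed) (auto simp: frontier_def interior_open)
  then have "closed_segment x (y0 i) \<subseteq> \<Omega>" using balls by (meson centre_in_ball subset_iff)
  moreover have "r \<le> setdist (closed_segment x (y0 i)) (frontier \<Omega>)"
    using balls frontier_nonempty by (intro ball_subset_imp_le_setdist_frontier) auto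
  ultimately show ?thesis using that[OF y0_in_Y[OF i(1)]] r_def by linarith
qed

lemma successively_adj_subset_Y: "successively adj ys \<Longrightarrow> hd ys \<in> Y \<Longrightarrow> set ys \<subseteq> Y"
  by (induction adj ys rule: successively.induct) (auto simp: adj_def)

lemma good_zigzag:
  assumes "x1 \<in> \<Omega>" and "x2 \<in> \<Omega>"
  shows "\<exists>ys :: (real^3) list.
        length ys \<ge> 1 \<and> set ys \<subseteq> Yset d m1 x0 \<nu> C \<and>
        closed_segment x1 (hd ys) \<subseteq> \<Omega> \<and>
        closed_segment (last ys) x2 \<subseteq> \<Omega> \<and>
        (\<forall>i. i + 1 < length ys \<longrightarrow> closed_segment (ys ! i) (ys ! (i+1)) \<subseteq> \<Omega>) \<and>
        setdist (closed_segment x1 (hd ys)) (frontier \<Omega>) \<ge> min (infdist x1 (frontier \<Omega>)) (d/10) \<and>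
        setdist (closed_segment x2 (last ys)) (frontier \<Omega>) \<ge> min (infdist x2 (frontier \<Omega>)) (d/10) \<and>
        (\<forall>i. i + 1 < length ys \<longrightarrow> setdist (closed_segment (ys ! i) (ys ! (i+1))) (frontier \<Omega>) > d/10)"
proof -
  obtain y1 where y1: "y1 \<in> Y" "closed_segment x1 y1 \<subseteq> \<Omega>"
    "min (infdist x1 (frontier \<Omega>)) (d/10) \<le> setdist (closed_segment x1 y1) (frontier \<Omega>)"
    using segment_to_Y[OF assms(1)] .
  obtain y2 where y2: "y2 \<in> Y" "closed_segment x2 y2 \<subseteq> \<Omega>"
    "min (infdist x2 (frontier \<Omega>)) (d/10) \<le> setdist (closed_segment x2 y2) (frontier \<Omega>)"
    using segment_to_Y[OF assms(2)] .
  obtain ys where ys: "ys \<noteq> []" "hd ys = y1" "last ys = y2" "successively adj ys"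
    using rtranclp_imp_successively[OF Y_chain[OF y1(1) y2(1)]] .
  have "set ys \<subseteq> Y" using successively_adj_subset_Y ys(2,4) y1(1) by blast
  moreover have "closed_segment (ys ! k) (ys ! (k+1)) \<subseteq> \<Omega> \<and>
      d/10 < setdist (closed_segment (ys ! k) (ys ! (k+1))) (frontier \<Omega>)" if "k + 1 < length ys" for k
  proof -
    have "adj (ys ! k) (ys ! (k+1))" using successively_nth[OF ys(4), of k] that by simp
    then have "ys ! k \<in> core" "ys ! (k+1) \<in> core" "dist (ys ! k) (ys ! (k+1)) < d/8"
      using Y_subset_core by (auto simp: adj_def)
    then show ?thesis using adj_segment by blast
  qed
  ultimately show ?thesis
    using ys y1 y2 by (intro exI[of _ ys]) (auto simp: closed_segment_commute Suc_le_eq)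
qed

end

text \<open>The charts are supplied by the hypothesis \<open>good_charts\<close>.\<close>
theorem lemma2p6:
  fixes \<Omega> :: "(real^3) set"
  assumes "open \<Omega>" and "bounded \<Omega>" and "connected \<Omega>" and "\<Omega> \<noteq> {}"
    and "C2_boundary \<Omega>"
  shows "\<exists>\<delta>>0. \<forall>d m1 x0 e1 e2 \<nu> \<phi> g C x1 x2.
     0 < d \<and> d < min 1 \<delta> \<and> good_charts \<Omega> d m1 x0 e1 e2 \<nu> \<phi> g \<and>
     min_subcover_centres \<Omega> d C \<and> x1 \<in> \<Omega> \<and> x2 \<in> \<Omega> \<longrightarrow>
     (\<exists>ys :: (real^3) list.
        length ys \<ge> 1 \<and> set ys \<subseteq> Yset d m1 x0 \<nu> C \<and>
        closed_segment x1 (hd ys) \<subseteq> \<Omega> \<and>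
        closed_segment (last ys) x2 \<subseteq> \<Omega> \<and>
        (\<forall>i. i + 1 < length ys \<longrightarrow> closed_segment (ys ! i) (ys ! (i+1)) \<subseteq> \<Omega>) \<and>
        setdist (closed_segment x1 (hd ys)) (frontier \<Omega>) \<ge> min (infdist x1 (frontier \<Omega>)) (d/10) \<and>
        setdist (closed_segment x2 (last ys)) (frontier \<Omega>) \<ge> min (infdist x2 (frontier \<Omega>)) (d/10) \<and>
        (\<forall>i. i + 1 < length ys \<longrightarrow> setdist (closed_segment (ys ! i) (ys ! (i+1))) (frontier \<Omega>) > d/10))"
proof -
  have "zigzag_setting \<Omega> d m1 x0 e1 e2 \<nu> \<phi> g C"
    if "0 < d" "good_charts \<Omega> d m1 x0 e1 e2 \<nu> \<phi> g" "min_subcover_centres \<Omega> d C"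
    for d m1 x0 e1 e2 \<nu> \<phi> g C
    using assms that by (simp add: zigzag_setting_def)
  then show ?thesis
    by (intro exI[of _ "1::real"] conjI allI impI zigzag_setting.good_zigzag) auto
qed

end
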